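(* Let $\mathcal{W}$ be the smallest class of digraphs such that: (1) every transitive oriented graph is in $\mathcal{W}$; (2) every semicomplete digraph is in $\mathcal{W}$; (3) every symmetric digraph is in $\mathcal{W}$; (4) if $D \in \mathcal{W}$ has vertices $v_1,\dots,v_n$ and $H_1,\dots,H_n \in \mathcal{W}$, then $D[H_1,\dots,H_n] \in \mathcal{W}$. Then $\mathcal{W}$ is exactly the class of weakly quasi-transitive digraphs.
   Context: Digraphs are finite, have no loops and no multiple arcs, but may contain digons; an arc lying in a digon is called symmetric, otherwise non-symmetric. An oriented graph has no symmetric arc; a symmetric digraph has only symmetric arcs. A transitive oriented graph is an oriented graph such that arcs $uv$ and $vw$ imply the arc $uw$. A digraph is semicomplete if between any two distinct vertices there is at least one arc. $N^-(v)$ / $N^+(v)$ denote the sets of in-/out-neighbours of $v$; two vertices are adjacent if there is at least one arc between them. Two neighbours $u,w$ of $v$ are synchronous neighbours of $v$ if both lie in $N^-(v)\setminus N^+(v)$, or both in $N^+(v)\setminus N^-(v)$, or both in $N^-(v)\cap N^+(v)$; otherwise they are asynchronous. A digraph is weakly quasi-transitive if for each vertex $v$, any two asynchronous neighbours of $v$ are adjacent. For a digraph $D$ with vertices $v_1,\dots,v_n$ and vertex-disjoint digraphs $H_1,\dots,H_n$, the substitution $D[H_1,\dots,H_n]$ is the digraph obtained from the disjoint union of $H_1,\dots,H_n$ by adding all arcs $xy$ with $x \in V(H_i)$, $y \in V(H_j)$ for every arc $v_iv_j$ of $D$. *)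

theory Defs
  imports Main
begin

text \<open>A digraph is given by a vertex set V and an arc set A (a set of ordered pairs):
finite, no loops; no multiple arcs is automatic; digons allowed.\<close>

definition digraph :: "'a set \<Rightarrow> ('a \<times> 'a) set \<Rightarrow> bool" where
  "digraph V A \<longleftrightarrow> finite V \<and> A \<subseteq> V \<times> V \<and> (\<forall>v. (v, v) \<notin> A)"

definition adjacent :: "('a \<times> 'a) set \<Rightarrow> 'a \<Rightarrow> 'a \<Rightarrow> bool" where
  "adjacent A u w \<longleftrightarrow> (u, w) \<in> A \<or> (w, u) \<in> A"

definition in_nbrs :: "('a \<times> 'a) set \<Rightarrow> 'a \<Rightarrow> 'a set" where
  "in_nbrs A v = {u. (u, v) \<in> A}"

definition out_nbrs :: "('a \<times> 'a) set \<Rightarrow> 'a \<Rightarrow> 'a set" where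
  "out_nbrs A v = {u. (v, u) \<in> A}"

definition synchronous :: "('a \<times> 'a) set \<Rightarrow> 'a \<Rightarrow> 'a \<Rightarrow> 'a \<Rightarrow> bool" where
  "synchronous A v u w \<longleftrightarrow>
     (u \<in> in_nbrs A v - out_nbrs A v \<and> w \<in> in_nbrs A v - out_nbrs A v) \<or>
     (u \<in> out_nbrs A v - in_nbrs A v \<and> w \<in> out_nbrs A v - in_nbrs A v) \<or>
     (u \<in> in_nbrs A v \<inter> out_nbrs A v \<and> w \<in> in_nbrs A v \<inter> out_nbrs A v)"

definition weakly_quasi_transitive :: "'a set \<Rightarrow> ('a \<times> 'a) set \<Rightarrow> bool" where
  "weakly_quasi_transitive V A \<longleftrightarrow>
     (\<forall>v\<in>V. \<forall>u w. adjacent A v u \<and> adjacent A v w \<and> \<not> synchronous A v u w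
        \<longrightarrow> adjacent A u w)"

definition oriented :: "('a \<times> 'a) set \<Rightarrow> bool" where
  "oriented A \<longleftrightarrow> (\<forall>u v. (u, v) \<in> A \<longrightarrow> (v, u) \<notin> A)"

definition transitive_oriented :: "'a set \<Rightarrow> ('a \<times> 'a) set \<Rightarrow> bool" where
  "transitive_oriented V A \<longleftrightarrow> oriented A \<and>
     (\<forall>u v w. (u, v) \<in> A \<and> (v, w) \<in> A \<longrightarrow> (u, w) \<in> A)"

definition semicomplete :: "'a set \<Rightarrow> ('a \<times> 'a) set \<Rightarrow> bool" where
  "semicomplete V A \<longleftrightarrow> (\<forall>u\<in>V. \<forall>w\<in>V. u \<noteq> w \<longrightarrow> adjacent A u w)"

definition symmetric_digraph :: "'a set \<Rightarrow> ('a \<times> 'a) set \<Rightarrow> bool" where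
  "symmetric_digraph V A \<longleftrightarrow> (\<forall>u w. (u, w) \<in> A \<longrightarrow> (w, u) \<in> A)"

text \<open>Substitution D[H_v : v in V(D)]: HV v / HA v are the vertex / arc sets of the
digraph substituted for vertex v of D = (VD, AD).\<close>

definition subst_vertices :: "'a set \<Rightarrow> ('a \<Rightarrow> 'b set) \<Rightarrow> 'b set" where
  "subst_vertices VD HV = (\<Union>v\<in>VD. HV v)"

definition subst_arcs ::
  "'a set \<Rightarrow> ('a \<times> 'a) set \<Rightarrow> ('a \<Rightarrow> 'b set) \<Rightarrow> ('a \<Rightarrow> ('b \<times> 'b) set) \<Rightarrow> ('b \<times> 'b) set" where
  "subst_arcs VD AD HV HA = (\<Union>v\<in>VD. HA v) \<union>
     {(x, y). \<exists>u w. (u, w) \<in> AD \<and> x \<in> HV u \<and> y \<in> HV w}"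

inductive classW :: "'a set \<Rightarrow> ('a \<times> 'a) set \<Rightarrow> bool" where
  trans_or: "digraph V A \<Longrightarrow> transitive_oriented V A \<Longrightarrow> classW V A"
| semicompl: "digraph V A \<Longrightarrow> semicomplete V A \<Longrightarrow> classW V A"
| symm: "digraph V A \<Longrightarrow> symmetric_digraph V A \<Longrightarrow> classW V A"
| subst: "classW VD AD \<Longrightarrow>
          (\<And>v. v \<in> VD \<Longrightarrow> classW (HV v) (HA v)) \<Longrightarrow>
          (\<And>v. v \<in> VD \<Longrightarrow> HV v \<noteq> {}) \<Longrightarrow>
          (\<And>v w. v \<in> VD \<Longrightarrow> w \<in> VD \<Longrightarrow> v \<noteq> w \<Longrightarrow> HV v \<inter> HV w = {}) \<Longrightarrow>
          classW (subst_vertices VD HV) (subst_arcs VD AD HV HA)"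

end

theory Submission
  imports Defs
begin

(* Soundness: in a substitution D[H_v], two vertices of the same H_v see each other as in H_v,
   and vertices of distinct H_a, H_b see each other as a and b do in D, so weak
   quasi-transitivity of D and of all H_v transfers to D[H_v].

   Completeness, by induction on the number of vertices: a module M with 2 <= |M| < |V| exhibits
   D as a substitution of D[M] into the digraph obtained by contracting M to a vertex. A prime
   acyclic weakly quasi-transitive digraph is transitive. A prime one with a cycle contains a digon
   or a directed triangle, i.e. a strong set on which the complement of the underlying graph is
   disconnected. A strong set on which the complement or the asymmetric part of the underlying
   graph is disconnected keeps this property when a vertex distinguishing two of its members is
   added, so by primality it grows to V. Components of both graphs are modules; hence in a prime
   digraph the complement or the asymmetric part has no edges at all, i.e. D is semicomplete or
   symmetric. *)

definition arc_type :: "('a \<times> 'a) set \<Rightarrow> 'a \<Rightarrow> 'a \<Rightarrow> bool \<times> bool" where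
  "arc_type A u v = ((u, v) \<in> A, (v, u) \<in> A)"

lemma arc_type_swap: "arc_type A v u = prod.swap (arc_type A u v)"
  unfolding arc_type_def by simp

lemma adjacent_iff_arc_type: "adjacent A u v \<longleftrightarrow> arc_type A u v \<noteq> (False, False)"
  unfolding adjacent_def arc_type_def by simp

lemma adjacent_commute: "adjacent A u v \<longleftrightarrow> adjacent A v u"
  unfolding adjacent_def by auto

lemma synchronous_iff_arc_type_eq:
  assumes "adjacent A v u" "adjacent A v w"
  shows "synchronous A v u w \<longleftrightarrow> arc_type A v u = arc_type A v w"
  using assms unfolding synchronous_def arc_type_def adjacent_def in_nbrs_def out_nbrs_def
  by auto

lemma weakly_quasi_transitive_iff_arc_type:
  "weakly_quasi_transitive V A \<longleftrightarrow>
     (\<forall>v\<in>V. \<forall>u w. adjacent A v u \<longrightarrow> adjacent A v w \<longrightarrow> \<not> adjacent A u w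
        \<longrightarrow> arc_type A v u = arc_type A v w)"
  unfolding weakly_quasi_transitive_def using synchronous_iff_arc_type_eq by metis

lemma weakly_quasi_transitiveD:
  assumes "weakly_quasi_transitive V A" "v \<in> V" "adjacent A v u" "adjacent A v w"
    "\<not> adjacent A u w"
  shows "arc_type A v u = arc_type A v w"
  using assms unfolding weakly_quasi_transitive_iff_arc_type by blast

lemma weakly_quasi_transitiveI:
  assumes "\<And>v u w. v \<in> V \<Longrightarrow> adjacent A v u \<Longrightarrow> adjacent A v w \<Longrightarrow> \<not> adjacent A u w
             \<Longrightarrow> arc_type A v u = arc_type A v w"
  shows "weakly_quasi_transitive V A"
  using assms unfolding weakly_quasi_transitive_iff_arc_type by blast

lemma transitive_oriented_imp_wqt:
  assumes "transitive_oriented V A"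
  shows "weakly_quasi_transitive V A"
  using assms
  unfolding weakly_quasi_transitive_iff_arc_type transitive_oriented_def oriented_def arc_type_def
    adjacent_def
  by blast

lemma semicomplete_imp_wqt:
  assumes "digraph V A" "semicomplete V A"
  shows "weakly_quasi_transitive V A"
proof (rule weakly_quasi_transitiveI)
  fix v u w assume "v \<in> V" "adjacent A v u" "adjacent A v w" "\<not> adjacent A u w"
  moreover from this have "u \<in> V" "w \<in> V"
    using assms(1) unfolding digraph_def adjacent_def by auto
  ultimately show "arc_type A v u = arc_type A v w"
    using assms(2) unfolding semicomplete_def by metis
qed

lemma symmetric_imp_wqt:
  assumes "symmetric_digraph V A"
  shows "weakly_quasi_transitive V A"
  using assms
  unfolding weakly_quasi_transitive_iff_arc_type symmetric_digraph_def arc_type_def adjacent_def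
  by blast

locale substitution =
  fixes VD :: "'a set" and AD :: "('a \<times> 'a) set"
    and HV :: "'a \<Rightarrow> 'b set" and HA :: "'a \<Rightarrow> ('b \<times> 'b) set"
  assumes digraph_outer: "digraph VD AD"
    and digraph_inner: "\<And>v. v \<in> VD \<Longrightarrow> digraph (HV v) (HA v)"
    and disjoint_inner: "\<And>v w. v \<in> VD \<Longrightarrow> w \<in> VD \<Longrightarrow> v \<noteq> w \<Longrightarrow> HV v \<inter> HV w = {}"
begin

lemma subst_arcs_iff:
  assumes "a \<in> VD" "b \<in> VD" "x \<in> HV a" "y \<in> HV b"
  shows "(x, y) \<in> subst_arcs VD AD HV HA \<longleftrightarrow> (if a = b then (x, y) \<in> HA a else (a, b) \<in> AD)"
proof -
  have owner_x: "c = a" if "c \<in> VD" "x \<in> HV c" for c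
    using disjoint_inner assms that by blast
  have owner_y: "c = b" if "c \<in> VD" "y \<in> HV c" for c
    using disjoint_inner assms that by blast
  have inner: "(x, y) \<in> (\<Union>c\<in>VD. HA c) \<longleftrightarrow> a = b \<and> (x, y) \<in> HA a"
    using digraph_inner owner_x owner_y assms unfolding digraph_def by blast
  have "AD \<subseteq> VD \<times> VD" "\<And>c. (c, c) \<notin> AD"
    using digraph_outer unfolding digraph_def by auto
  then have outer: "(\<exists>u w. (u, w) \<in> AD \<and> x \<in> HV u \<and> y \<in> HV w) \<longleftrightarrow> a \<noteq> b \<and> (a, b) \<in> AD"
    using owner_x owner_y assms by blast
  show ?thesis
    using inner outer unfolding subst_arcs_def by auto
qed

lemma subst_arc_type:
  assumes "a \<in> VD" "b \<in> VD" "x \<in> HV a" "y \<in> HV b"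
  shows "arc_type (subst_arcs VD AD HV HA) x y =
           (if a = b then arc_type (HA a) x y else arc_type AD a b)"
  using subst_arcs_iff[OF assms] subst_arcs_iff[OF assms(2,1,4,3)]
  unfolding arc_type_def by auto

lemma digraph_subst: "digraph (subst_vertices VD HV) (subst_arcs VD AD HV HA)"
proof -
  have "finite (subst_vertices VD HV)"
    using digraph_outer digraph_inner unfolding digraph_def subst_vertices_def by auto
  moreover have "subst_arcs VD AD HV HA \<subseteq> subst_vertices VD HV \<times> subst_vertices VD HV"
    using digraph_outer digraph_inner unfolding digraph_def subst_vertices_def subst_arcs_def
    by fastforce
  moreover have "(x, x) \<notin> subst_arcs VD AD HV HA" for x
  proof
    assume loop: "(x, x) \<in> subst_arcs VD AD HV HA"
    then obtain a where "a \<in> VD" "x \<in> HV a"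
      using calculation(2) unfolding subst_vertices_def by blast
    then show False
      using loop subst_arcs_iff digraph_inner unfolding digraph_def by fastforce
  qed
  ultimately show ?thesis unfolding digraph_def by blast
qed

lemma wqt_subst:
  assumes "weakly_quasi_transitive VD AD"
    and "\<And>v. v \<in> VD \<Longrightarrow> weakly_quasi_transitive (HV v) (HA v)"
  shows "weakly_quasi_transitive (subst_vertices VD HV) (subst_arcs VD AD HV HA)"
proof (rule weakly_quasi_transitiveI)
  let ?V = "subst_vertices VD HV" and ?A = "subst_arcs VD AD HV HA"
  fix z x y
  assume z: "z \<in> ?V" and zx: "adjacent ?A z x" and zy: "adjacent ?A z y"
    and xy: "\<not> adjacent ?A x y"
  have "x \<in> ?V" "y \<in> ?V"
    using zx zy digraph_subst unfolding adjacent_def digraph_def by auto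
  then obtain a b c where abc: "a \<in> VD" "b \<in> VD" "c \<in> VD" "z \<in> HV a" "x \<in> HV b" "y \<in> HV c"
    using z unfolding subst_vertices_def by blast
  note types = subst_arc_type[OF abc(1,2,4,5)] subst_arc_type[OF abc(1,3,4,6)]
    subst_arc_type[OF abc(2,3,5,6)]
  have xy_type: "arc_type ?A x y = (False, False)"
    using xy unfolding adjacent_iff_arc_type by simp
  consider "b = a" "c = a" | "b = a" "c \<noteq> a" | "b \<noteq> a" "c = a" | "b \<noteq> a" "c \<noteq> a"
    by blast
  then show "arc_type ?A z x = arc_type ?A z y"
  proof cases
    case 1
    then show ?thesis
      using zx zy xy types weakly_quasi_transitiveD[OF assms(2)[OF abc(1)] abc(4)]
      unfolding adjacent_iff_arc_type by simp
  next
    case 2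
    then show ?thesis
      using zy xy_type types unfolding adjacent_iff_arc_type by simp
  next
    case 3
    then show ?thesis
      using zx xy_type types arc_type_swap[of AD a b] unfolding adjacent_iff_arc_type by simp
  next
    case 4
    then show ?thesis
      using zx zy xy types weakly_quasi_transitiveD[OF assms(1) abc(1), of b c]
      unfolding adjacent_iff_arc_type by (cases "b = c") simp_all
  qed
qed

end

lemma classW_imp_digraph_wqt: "classW V A \<Longrightarrow> digraph V A \<and> weakly_quasi_transitive V A"
proof (induction rule: classW.induct)
  case (subst VD AD HV HA)
  then interpret substitution VD AD HV HA
    by unfold_locales auto
  show ?case
    using subst digraph_subst wqt_subst by blast
qed (use transitive_oriented_imp_wqt semicomplete_imp_wqt symmetric_imp_wqt in blast)+

lemma rtrancl_exit:
  assumes "(a, b) \<in> R\<^sup>*" "a \<in> S" "b \<notin> S"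
  obtains c d where "(c, d) \<in> R" "c \<in> S" "d \<notin> S"
  using assms by (induction rule: rtrancl_induct) auto

lemma rtrancl_closed: "(a, b) \<in> R\<^sup>* \<Longrightarrow> R \<subseteq> M \<times> M \<Longrightarrow> a \<in> M \<Longrightarrow> b \<in> M"
  by (induction rule: rtrancl_induct) auto

lemma rtrancl_sym_commute: "sym R \<Longrightarrow> (a, b) \<in> R\<^sup>* \<longleftrightarrow> (b, a) \<in> R\<^sup>*"
  using sym_rtrancl symD by metis

definition connected_on :: "('a \<times> 'a) set \<Rightarrow> 'a set \<Rightarrow> bool" where
  "connected_on R M \<longleftrightarrow> (\<forall>a\<in>M. \<forall>b\<in>M. (a, b) \<in> R\<^sup>*)"

lemma connected_onI_sym:
  assumes "sym R" "\<And>w. w \<in> M \<Longrightarrow> (p, w) \<in> R\<^sup>*"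
  shows "connected_on R M"
  using assms rtrancl_sym_commute rtrancl_trans unfolding connected_on_def by metis

lemma not_connected_onE:
  assumes "\<not> connected_on R M" "sym R" "p \<in> M"
  obtains w where "w \<in> M" "(p, w) \<notin> R\<^sup>*"
  using assms connected_onI_sym by metis

lemma connected_on_insert_exit:
  assumes "connected_on R' (insert x M)" "R \<subseteq> M \<times> M" "x \<notin> M"
    and "\<And>c d. (c, d) \<in> R' \<Longrightarrow> c \<noteq> x \<Longrightarrow> d \<noteq> x \<Longrightarrow> (c, d) \<in> R"
    and "w \<in> M" "p \<in> M" "(w, p) \<notin> R\<^sup>*"
  obtains c where "(w, c) \<in> R\<^sup>*" "(c, x) \<in> R'"
proof -
  have "(w, p) \<in> R'\<^sup>*"
    using assms(1,5,6) unfolding connected_on_def by blast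
  then obtain c d where cd: "(c, d) \<in> R'" "(w, c) \<in> R\<^sup>*" "(w, d) \<notin> R\<^sup>*"
    using rtrancl_exit[of w p R' "R\<^sup>* `` {w}"] assms(7) by auto
  have "c \<noteq> x"
    using rtrancl_closed[OF cd(2) assms(2,5)] assms(3) by blast
  moreover have "(c, d) \<notin> R"
    using cd(2,3) rtrancl_into_rtrancl by metis
  ultimately have "d = x"
    using assms(4) cd(1) by blast
  then show thesis
    using that cd by blast
qed

definition strongly_connected_on :: "('a \<times> 'a) set \<Rightarrow> 'a set \<Rightarrow> bool" where
  "strongly_connected_on A M \<longleftrightarrow> connected_on (A \<inter> M \<times> M) M"

lemma strongly_connected_on_exit:
  assumes "strongly_connected_on A M" "a \<in> M" "a \<in> S" "b \<in> M" "b \<notin> S"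
  obtains c d where "(c, d) \<in> A" "c \<in> M" "d \<in> M" "c \<in> S" "d \<notin> S"
  using assms rtrancl_exit[of a b "A \<inter> M \<times> M" S]
  unfolding strongly_connected_on_def connected_on_def by blast

lemma strongly_connected_on_insert:
  assumes "strongly_connected_on A M" "p \<in> M" "q \<in> M" "(p, x) \<in> A" "(x, q) \<in> A"
  shows "strongly_connected_on A (insert x M)"
proof -
  let ?R = "A \<inter> insert x M \<times> insert x M"
  have old: "(a, b) \<in> ?R\<^sup>*" if "a \<in> M" "b \<in> M" for a b
    using assms(1) that rtrancl_mono[of "A \<inter> M \<times> M" ?R]
    unfolding strongly_connected_on_def connected_on_def by blast
  have "(p, x) \<in> ?R\<^sup>*" "(x, q) \<in> ?R\<^sup>*"
    using assms by auto
  then show ?thesis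
    using old assms(2,3) rtrancl_trans
    unfolding strongly_connected_on_def connected_on_def by (metis insert_iff rtrancl.rtrancl_refl)
qed

definition complement_edges :: "('a \<times> 'a) set \<Rightarrow> 'a set \<Rightarrow> ('a \<times> 'a) set" where
  "complement_edges A M = {(a, b). a \<in> M \<and> b \<in> M \<and> a \<noteq> b \<and> \<not> adjacent A a b}"

definition asymmetric_edges :: "('a \<times> 'a) set \<Rightarrow> 'a set \<Rightarrow> ('a \<times> 'a) set" where
  "asymmetric_edges A M =
     {(a, b). a \<in> M \<and> b \<in> M \<and> adjacent A a b \<and> \<not> ((a, b) \<in> A \<and> (b, a) \<in> A)}"

lemma sym_complement_edges: "sym (complement_edges A M)"
  unfolding sym_def complement_edges_def adjacent_def by auto

lemma sym_asymmetric_edges: "sym (asymmetric_edges A M)"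
  unfolding sym_def asymmetric_edges_def adjacent_def by auto

definition module :: "'a set \<Rightarrow> ('a \<times> 'a) set \<Rightarrow> 'a set \<Rightarrow> bool" where
  "module V A M \<longleftrightarrow> M \<subseteq> V \<and> (\<forall>x\<in>V - M. \<forall>m\<in>M. \<forall>m'\<in>M. arc_type A x m = arc_type A x m')"

definition prime_digraph :: "'a set \<Rightarrow> ('a \<times> 'a) set \<Rightarrow> bool" where
  "prime_digraph V A \<longleftrightarrow> (\<forall>M. module V A M \<and> 2 \<le> card M \<longrightarrow> M = V)"

lemma complement_component_uniform:
  assumes W: "weakly_quasi_transitive V A" and "M \<subseteq> V" "y \<in> M" "p \<in> M"
    and pk: "(p, k) \<in> (complement_edges A M)\<^sup>*" and py: "(p, y) \<notin> (complement_edges A M)\<^sup>*"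
  shows "adjacent A y k \<and> arc_type A y k = arc_type A y p"
  using pk
proof (induction rule: rtrancl_induct)
  case base
  then show ?case
    using py assms(3,4) unfolding complement_edges_def adjacent_def by blast
next
  case (step k k')
  then have k': "k' \<in> M" "\<not> adjacent A k k'" "(p, k') \<in> (complement_edges A M)\<^sup>*"
    unfolding complement_edges_def by (auto intro: rtrancl_into_rtrancl)
  then have "y \<noteq> k'" "(k', y) \<notin> complement_edges A M"
    using py rtrancl_into_rtrancl by metis+
  then have "adjacent A y k'"
    using assms(3) k'(1) unfolding complement_edges_def adjacent_def by auto
  then show ?case
    using weakly_quasi_transitiveD[OF W, of y k k'] step.IH k' assms(2,3) by auto
qed

lemma wqt_digon_asymmetric_adjacent:
  assumes W: "weakly_quasi_transitive V A" and "a \<in> V" "(a, u) \<in> A" "(u, a) \<in> A"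
    and "adjacent A a w" "\<not> ((a, w) \<in> A \<and> (w, a) \<in> A)"
  shows "adjacent A u w"
proof (rule ccontr)
  assume "\<not> adjacent A u w"
  then have "arc_type A a u = arc_type A a w"
    using weakly_quasi_transitiveD[OF W assms(2) _ assms(5)] assms(3) unfolding adjacent_def
    by blast
  then show False
    using assms(3,4,6) unfolding arc_type_def by auto
qed

lemma asymmetric_edge_uniform:
  assumes W: "weakly_quasi_transitive V A" and "M \<subseteq> V" "y \<in> M"
    and kk': "(k, k') \<in> asymmetric_edges A M"
    and "(k, y) \<notin> asymmetric_edges A M" "(k', y) \<notin> asymmetric_edges A M"
  shows "arc_type A y k = arc_type A y k'"
proof -
  have k: "k \<in> V" "k' \<in> V" "adjacent A k k'" "\<not> ((k, k') \<in> A \<and> (k', k) \<in> A)"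
    using kk' assms(2) unfolding asymmetric_edges_def by auto
  have digon: "(y, z) \<in> A \<and> (z, y) \<in> A" if "adjacent A y z" "z \<in> {k, k'}" for z
    using assms(3,5,6) k kk' that unfolding asymmetric_edges_def adjacent_def by auto
  have "adjacent A y k \<longleftrightarrow> adjacent A y k'"
    using wqt_digon_asymmetric_adjacent[OF W k(1), of y k']
      wqt_digon_asymmetric_adjacent[OF W k(2), of y k] digon k adjacent_commute[of A k k']
    by blast
  then show ?thesis
    using digon unfolding arc_type_def adjacent_def by auto
qed

lemma asymmetric_component_uniform:
  assumes W: "weakly_quasi_transitive V A" and "M \<subseteq> V" "y \<in> M"
    and pk: "(p, k) \<in> (asymmetric_edges A M)\<^sup>*" and py: "(p, y) \<notin> (asymmetric_edges A M)\<^sup>*"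
  shows "arc_type A y k = arc_type A y p"
  using pk
proof (induction rule: rtrancl_induct)
  case (step k k')
  then have "(k, y) \<notin> asymmetric_edges A M" "(k', y) \<notin> asymmetric_edges A M"
    using py rtrancl.rtrancl_into_rtrancl by metis+
  then show ?case
    using asymmetric_edge_uniform[OF assms(1-3) step(2)] step.IH by simp
qed simp

lemma module_rtrancl_Image:
  assumes "R \<subseteq> V \<times> V" "u \<in> V"
    and "\<And>x m. x \<in> V \<Longrightarrow> (u, x) \<notin> R\<^sup>* \<Longrightarrow> (u, m) \<in> R\<^sup>* \<Longrightarrow> arc_type A x m = arc_type A x u"
  shows "module V A (R\<^sup>* `` {u})"
  unfolding module_def
proof (intro conjI ballI)
  show "R\<^sup>* `` {u} \<subseteq> V"
    using rtrancl_closed[OF _ assms(1,2)] by blast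
  fix x m m'
  assume "x \<in> V - R\<^sup>* `` {u}" "m \<in> R\<^sup>* `` {u}" "m' \<in> R\<^sup>* `` {u}"
  then show "arc_type A x m = arc_type A x m'"
    using assms(3)[of x m] assms(3)[of x m'] by auto
qed

lemma module_complement_component:
  assumes "weakly_quasi_transitive V A" "u \<in> V"
  shows "module V A ((complement_edges A V)\<^sup>* `` {u})"
proof (rule module_rtrancl_Image[OF _ assms(2)])
  show "complement_edges A V \<subseteq> V \<times> V"
    unfolding complement_edges_def by auto
qed (use complement_component_uniform[OF assms(1) subset_refl _ assms(2)] in blast)

lemma module_asymmetric_component:
  assumes "weakly_quasi_transitive V A" "u \<in> V"
  shows "module V A ((asymmetric_edges A V)\<^sup>* `` {u})"
proof (rule module_rtrancl_Image[OF _ assms(2)])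
  show "asymmetric_edges A V \<subseteq> V \<times> V"
    unfolding asymmetric_edges_def by auto
qed (use asymmetric_component_uniform[OF assms(1) subset_refl] in blast)

lemma prime_digraph_connected_on:
  assumes "finite V" "prime_digraph V A" "sym R" "(u, w) \<in> R" "u \<noteq> w"
    and "module V A (R\<^sup>* `` {u})"
  shows "connected_on R V"
proof -
  have "{u, w} \<subseteq> R\<^sup>* `` {u}" "R\<^sup>* `` {u} \<subseteq> V"
    using assms(4,6) unfolding module_def by auto
  then have "card {u, w} \<le> card (R\<^sup>* `` {u})"
    using card_mono finite_subset assms(1) by metis
  then have "2 \<le> card (R\<^sup>* `` {u})"
    using assms(5) by simp
  then have "R\<^sup>* `` {u} = V"
    using assms(2,6) unfolding prime_digraph_def by blast
  then show ?thesis
    using connected_onI_sym[OF assms(3), of V u] by blast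
qed

lemma not_connected_on_isolated:
  assumes "x \<in> M" "m \<in> M" "x \<noteq> m" "\<And>y. (x, y) \<notin> R"
  shows "\<not> connected_on R M"
  using assms unfolding connected_on_def by (metis converse_rtranclE)

definition strong_decomposable :: "('a \<times> 'a) set \<Rightarrow> 'a set \<Rightarrow> bool" where
  "strong_decomposable A M \<longleftrightarrow> strongly_connected_on A M \<and>
     (\<not> connected_on (complement_edges A M) M \<or> \<not> connected_on (asymmetric_edges A M) M)"

lemma distinguishing_vertex_in_out_arcs:
  assumes W: "weakly_quasi_transitive V A" and "M \<subseteq> V" "strongly_connected_on A M"
    and "m1 \<in> M" "m2 \<in> M" "arc_type A x m1 \<noteq> arc_type A x m2"
  shows "\<exists>p\<in>M. (p, x) \<in> A" "\<exists>q\<in>M. (x, q) \<in> A"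
proof -
  have "(\<exists>p\<in>M. (p, x) \<in> A) \<and> (\<exists>q\<in>M. (x, q) \<in> A)"
  proof (cases "\<forall>m\<in>M. adjacent A x m")
    case True
    then show ?thesis
      using assms(4-6) unfolding arc_type_def adjacent_def by auto
  next
    case False
    then obtain q where q: "q \<in> M" "\<not> adjacent A x q" by blast
    obtain p where p: "p \<in> M" "adjacent A x p"
      using assms(4-6) unfolding arc_type_def adjacent_def by auto
    obtain c d where cd: "(c, d) \<in> A" "c \<in> M" "d \<in> M" "adjacent A x c" "\<not> adjacent A x d"
      using strongly_connected_on_exit[OF assms(3) p(1) _ q(1), of "{m. adjacent A x m}"] p q
      by auto
    then have "arc_type A c x = arc_type A c d"
      using weakly_quasi_transitiveD[OF W, of c x d] assms(2) adjacent_commute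
      unfolding adjacent_def by blast
    then have "(c, x) \<in> A"
      using cd(1) unfolding arc_type_def by simp
    moreover obtain c' d' where cd': "(c', d') \<in> A" "c' \<in> M" "d' \<in> M"
      "\<not> adjacent A x c'" "adjacent A x d'"
      using strongly_connected_on_exit[OF assms(3) q(1) _ p(1), of "{m. \<not> adjacent A x m}"] p q
      by auto
    then have "arc_type A d' x = arc_type A d' c'"
      using weakly_quasi_transitiveD[OF W, of d' x c'] assms(2) adjacent_commute
      unfolding adjacent_def by blast
    then have "(x, d') \<in> A"
      using cd'(1) unfolding arc_type_def by simp
    ultimately show ?thesis
      using cd(2) cd'(3) by blast
  qed
  then show "\<exists>p\<in>M. (p, x) \<in> A" "\<exists>q\<in>M. (x, q) \<in> A"
    by blast+
qed

lemma asymmetric_disconnected_insert: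
  assumes W: "weakly_quasi_transitive V A" and MV: "M \<subseteq> V" and st: "strongly_connected_on A M"
    and x: "x \<notin> M" and q: "q \<in> M" "\<not> adjacent A x q"
    and disconn: "\<not> connected_on (asymmetric_edges A M) M"
  shows "\<not> connected_on (asymmetric_edges A (insert x M)) (insert x M)"
proof
  let ?R = "asymmetric_edges A M" and ?R' = "asymmetric_edges A (insert x M)"
  assume conn: "connected_on ?R' (insert x M)"
  have symR: "sym ?R" by (rule sym_asymmetric_edges)
  have RM: "?R \<subseteq> M \<times> M"
    unfolding asymmetric_edges_def by auto
  obtain z where "z \<in> M" "(q, z) \<notin> ?R\<^sup>*"
    using not_connected_onE[OF disconn symR q(1)] .
  then obtain y z' where yz': "(y, z') \<in> A" "y \<in> M" "z' \<in> M" "(q, y) \<in> ?R\<^sup>*" "(q, z') \<notin> ?R\<^sup>*"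
    using strongly_connected_on_exit[OF st q(1), of "?R\<^sup>* `` {q}" z] by auto
  have "(y, z') \<notin> ?R"
    using yz'(4,5) rtrancl_into_rtrancl by metis
  then have "(z', y) \<in> A"
    using yz'(1-3) unfolding asymmetric_edges_def adjacent_def by auto
  have "(a, b) \<in> ?R" if "(a, b) \<in> ?R'" "a \<noteq> x" "b \<noteq> x" for a b
    using that unfolding asymmetric_edges_def by auto
  moreover have "(z', q) \<notin> ?R\<^sup>*"
    using yz'(5) rtrancl_sym_commute[OF symR] by blast
  ultimately obtain c where c: "(z', c) \<in> ?R\<^sup>*" "(c, x) \<in> ?R'"
    using connected_on_insert_exit[OF conn RM x _ yz'(3) q(1)] by blast
  have cM: "c \<in> M"
    using rtrancl_closed[OF c(1) RM yz'(3)] .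
  have "(z', y) \<notin> ?R\<^sup>*"
    using yz'(4,5) rtrancl_sym_commute[OF symR] rtrancl_trans by metis
  then have "arc_type A y c = arc_type A y z'"
    using asymmetric_component_uniform[OF W MV yz'(2) c(1)] by blast
  then have yc: "(y, c) \<in> A" "(c, y) \<in> A"
    using \<open>(z', y) \<in> A\<close> yz'(1) unfolding arc_type_def by auto
  have "(q, c) \<notin> ?R\<^sup>*"
    using yz'(5) c(1) rtrancl_sym_commute[OF symR] rtrancl_trans by metis
  then have "arc_type A c y = arc_type A c q"
    using asymmetric_component_uniform[OF W MV cM yz'(4)] by blast
  then have cq: "(c, q) \<in> A" "(q, c) \<in> A"
    using yc unfolding arc_type_def by auto
  have "adjacent A c x" "\<not> ((c, x) \<in> A \<and> (x, c) \<in> A)"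
    using c(2) unfolding asymmetric_edges_def by auto
  then have "adjacent A q x"
    using wqt_digon_asymmetric_adjacent[OF W _ cq] cM MV by blast
  then show False
    using q(2) adjacent_commute by metis
qed

lemma complement_connected_insert_digon:
  assumes W: "weakly_quasi_transitive V A" and MV: "M \<subseteq> V" and st: "strongly_connected_on A M"
    and x: "x \<notin> M" and disconn: "\<not> connected_on (complement_edges A M) M"
    and conn: "connected_on (complement_edges A (insert x M)) (insert x M)"
    and p: "p \<in> M" "adjacent A x p"
  shows "(x, p) \<in> A \<and> (p, x) \<in> A"
proof -
  let ?R = "complement_edges A M" and ?R' = "complement_edges A (insert x M)"
  have symR: "sym ?R" by (rule sym_complement_edges)
  have RM: "?R \<subseteq> M \<times> M"
    unfolding complement_edges_def by auto
  have far_from_p: "arc_type A p w = arc_type A p x" if w: "w \<in> M" "(p, w) \<notin> ?R\<^sup>*" for w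
  proof -
    have wp: "(w, p) \<notin> ?R\<^sup>*"
      using w(2) rtrancl_sym_commute[OF symR] by blast
    have "(a, b) \<in> ?R" if "(a, b) \<in> ?R'" "a \<noteq> x" "b \<noteq> x" for a b
      using that unfolding complement_edges_def by auto
    then obtain c where c: "(w, c) \<in> ?R\<^sup>*" "(c, x) \<in> ?R'"
      using connected_on_insert_exit[OF conn RM x _ w(1) p(1) wp] by blast
    have "adjacent A p c \<and> arc_type A p c = arc_type A p w"
      using complement_component_uniform[OF W MV p(1) w(1) c(1) wp] .
    moreover have "\<not> adjacent A c x"
      using c(2) unfolding complement_edges_def by auto
    ultimately show ?thesis
      using weakly_quasi_transitiveD[OF W _ _ p(2)[unfolded adjacent_commute[of A x p]], of c]
        p(1) MV by auto
  qed
  have across: "arc_type A k w = arc_type A p x"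
    if "(p, k) \<in> ?R\<^sup>*" "w \<in> M" "(p, w) \<notin> ?R\<^sup>*" for k w
    using complement_component_uniform[OF W MV that(2) p(1) that(1,3)] far_from_p[OF that(2,3)]
      arc_type_swap[of A k w] arc_type_swap[of A p w] by simp
  obtain w0 where w0: "w0 \<in> M" "(p, w0) \<notin> ?R\<^sup>*"
    using not_connected_onE[OF disconn symR p(1)] .
  obtain c d where "(c, d) \<in> A" "d \<in> M" "(p, c) \<in> ?R\<^sup>*" "(p, d) \<notin> ?R\<^sup>*"
    using strongly_connected_on_exit[OF st p(1) _ w0(1), of "?R\<^sup>* `` {p}"] w0(2) by blast
  then have "(p, x) \<in> A"
    using across unfolding arc_type_def by force
  moreover obtain c' d' where "(c', d') \<in> A" "c' \<in> M" "(p, c') \<notin> ?R\<^sup>*" "(p, d') \<in> ?R\<^sup>*"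
    using strongly_connected_on_exit[OF st w0(1) _ p(1), of "- ?R\<^sup>* `` {p}"] w0(2) by blast
  then have "(x, p) \<in> A"
    using across unfolding arc_type_def by force
  ultimately show ?thesis by simp
qed

lemma strong_decomposable_insert:
  assumes dg: "digraph V A" and W: "weakly_quasi_transitive V A" and MV: "M \<subseteq> V"
    and dec: "strong_decomposable A M" and x: "x \<notin> M"
    and m: "m1 \<in> M" "m2 \<in> M" "arc_type A x m1 \<noteq> arc_type A x m2"
  shows "strong_decomposable A (insert x M)"
proof -
  have st: "strongly_connected_on A M"
    using dec unfolding strong_decomposable_def by blast
  obtain p q where "p \<in> M" "(p, x) \<in> A" "q \<in> M" "(x, q) \<in> A"
    using distinguishing_vertex_in_out_arcs[OF W MV st m] by blast
  then have "strongly_connected_on A (insert x M)"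
    using strongly_connected_on_insert[OF st] by blast
  moreover have "\<not> connected_on (complement_edges A (insert x M)) (insert x M) \<or>
      \<not> connected_on (asymmetric_edges A (insert x M)) (insert x M)"
  proof (cases "\<forall>m\<in>M. adjacent A x m")
    case True
    then have "(x, y) \<notin> complement_edges A (insert x M)" for y
      unfolding complement_edges_def by auto
    then show ?thesis
      using not_connected_on_isolated[of x "insert x M" m1] m(1) x by blast
  next
    case False
    then obtain q where q: "q \<in> M" "\<not> adjacent A x q" by blast
    have "x \<noteq> q" using q x by blast
    show ?thesis
    proof (cases "connected_on (asymmetric_edges A M) M")
      case True
      then have disconn: "\<not> connected_on (complement_edges A M) M"
        using dec unfolding strong_decomposable_def by blast
      have "(x, y) \<notin> asymmetric_edges A (insert x M)"
        if "connected_on (complement_edges A (insert x M)) (insert x M)" for y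
        using complement_connected_insert_digon[OF W MV st x disconn that] dg
        unfolding asymmetric_edges_def digraph_def adjacent_def by auto
      then show ?thesis
        using not_connected_on_isolated[of x "insert x M" q] q(1) \<open>x \<noteq> q\<close> by blast
    next
      case False
      then show ?thesis
        using asymmetric_disconnected_insert[OF W MV st x q] by blast
    qed
  qed
  ultimately show ?thesis
    unfolding strong_decomposable_def by blast
qed

lemma prime_wqt_strong_decomposable:
  assumes dg: "digraph V A" and W: "weakly_quasi_transitive V A" and prime: "prime_digraph V A"
    and S: "S \<subseteq> V" "2 \<le> card S" "strong_decomposable A S"
  shows "strong_decomposable A V"
proof -
  let ?F = "{M. S \<subseteq> M \<and> M \<subseteq> V \<and> strong_decomposable A M}"
  have "?F \<subseteq> Pow V"
    by blast
  then have "finite ?F"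
    using dg finite_subset unfolding digraph_def by blast
  moreover have "?F \<noteq> {}"
    using S by blast
  ultimately obtain M where M: "M \<in> ?F" and maximal: "\<And>M'. M' \<in> ?F \<Longrightarrow> M \<subseteq> M' \<Longrightarrow> M = M'"
    using finite_has_maximal[of ?F] by (metis (no_types, lifting))
  have "M = V"
  proof (rule ccontr)
    assume "M \<noteq> V"
    moreover have "card S \<le> card M"
      using M card_mono finite_subset dg unfolding digraph_def by (metis mem_Collect_eq)
    ultimately have "\<not> module V A M"
      using prime S(2) unfolding prime_digraph_def by auto
    then obtain x m1 m2 where "x \<in> V" "x \<notin> M" "m1 \<in> M" "m2 \<in> M"
      "arc_type A x m1 \<noteq> arc_type A x m2"
      using M unfolding module_def by blast
    then have "insert x M \<in> ?F"
      using strong_decomposable_insert[OF dg W _ _ \<open>x \<notin> M\<close>] M by blast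
    then show False
      using maximal \<open>x \<notin> M\<close> by blast
  qed
  then show ?thesis
    using M by blast
qed

lemma prime_strong_decomposable_semicomplete_or_symmetric:
  assumes dg: "digraph V A" and W: "weakly_quasi_transitive V A" and prime: "prime_digraph V A"
    and dec: "strong_decomposable A V"
  shows "semicomplete V A \<or> symmetric_digraph V A"
proof -
  have fin: "finite V" and AV: "A \<subseteq> V \<times> V" and loopfree: "\<And>v. (v, v) \<notin> A"
    using dg unfolding digraph_def by auto
  have "semicomplete V A" if disconn: "\<not> connected_on (complement_edges A V) V"
    unfolding semicomplete_def
  proof (intro ballI impI)
    fix u w assume "u \<in> V" "w \<in> V" "u \<noteq> w"
    then show "adjacent A u w"
      using prime_digraph_connected_on[OF fin prime sym_complement_edges, of u w]
        module_complement_component[OF W \<open>u \<in> V\<close>] disconn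
      unfolding complement_edges_def by blast
  qed
  moreover have "symmetric_digraph V A" if disconn: "\<not> connected_on (asymmetric_edges A V) V"
    unfolding symmetric_digraph_def
  proof (intro allI impI)
    fix u w assume uw: "(u, w) \<in> A"
    then have "u \<in> V" "u \<noteq> w"
      using AV loopfree by auto
    then show "(w, u) \<in> A"
      using prime_digraph_connected_on[OF fin prime sym_asymmetric_edges, of u w]
        module_asymmetric_component[OF W \<open>u \<in> V\<close>] disconn uw AV
      unfolding asymmetric_edges_def adjacent_def by blast
  qed
  ultimately show ?thesis
    using dec unfolding strong_decomposable_def by blast
qed

lemma cycle_imp_digon_or_triangle:
  assumes dg: "digraph V A" and W: "weakly_quasi_transitive V A"
    and "(w, u) \<in> A\<^sup>+" "(u, w) \<in> A"
  shows "(\<exists>a b. (a, b) \<in> A \<and> (b, a) \<in> A) \<or> (\<exists>a b c. (a, b) \<in> A \<and> (b, c) \<in> A \<and> (c, a) \<in> A)"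
  using assms(3,4)
proof (induction rule: converse_trancl_induct)
  case (base w)
  then show ?case by blast
next
  case (step w p)
  have "w \<in> V"
    using step.hyps(1) dg unfolding digraph_def by auto
  consider "(w, u) \<in> A" | "(p, u) \<in> A" | "(u, p) \<in> A" | "\<not> adjacent A u p"
    unfolding adjacent_def by blast
  then show ?case
  proof cases
    case 4
    then have "arc_type A w u = arc_type A w p"
      using weakly_quasi_transitiveD[OF W \<open>w \<in> V\<close>, of u p] step.hyps(1) step.prems
      unfolding adjacent_def by blast
    then have "(w, u) \<in> A"
      using step.hyps(1) unfolding arc_type_def by simp
    then show ?thesis
      using step.prems by blast
  qed (use step in blast)+
qed

lemma strong_decomposable_if_complete:
  assumes "strongly_connected_on A S" "a \<in> S" "b \<in> S" "a \<noteq> b"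
    and "\<And>x y. x \<in> S \<Longrightarrow> y \<in> S \<Longrightarrow> x \<noteq> y \<Longrightarrow> adjacent A x y"
  shows "strong_decomposable A S"
proof -
  have "complement_edges A S = {}"
    using assms(5) unfolding complement_edges_def by blast
  then show ?thesis
    using assms(1-4) unfolding strong_decomposable_def connected_on_def by auto
qed

lemma strong_decomposable_digon:
  assumes "(a, b) \<in> A" "(b, a) \<in> A" "a \<noteq> b"
  shows "strong_decomposable A {a, b}"
proof (rule strong_decomposable_if_complete[of A "{a, b}" a b])
  have "(a, b) \<in> (A \<inter> {a, b} \<times> {a, b})\<^sup>*" "(b, a) \<in> (A \<inter> {a, b} \<times> {a, b})\<^sup>*"
    using assms by auto
  then show "strongly_connected_on A {a, b}"
    unfolding strongly_connected_on_def connected_on_def by auto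
qed (use assms in \<open>auto simp: adjacent_def\<close>)

lemma strong_decomposable_triangle:
  assumes "(a, b) \<in> A" "(b, c) \<in> A" "(c, a) \<in> A" "a \<noteq> b"
  shows "strong_decomposable A {a, b, c}"
proof (rule strong_decomposable_if_complete[of A "{a, b, c}" a b])
  let ?R = "A \<inter> {a, b, c} \<times> {a, b, c}"
  have "(a, b) \<in> ?R\<^sup>*" "(b, c) \<in> ?R\<^sup>*" "(c, a) \<in> ?R\<^sup>*"
    using assms by auto
  then have "(x, y) \<in> ?R\<^sup>*" if "x \<in> {a, b, c}" "y \<in> {a, b, c}" for x y
    using that rtrancl_trans[of _ _ ?R] by blast
  then show "strongly_connected_on A {a, b, c}"
    unfolding strongly_connected_on_def connected_on_def by blast
qed (use assms in \<open>auto simp: adjacent_def\<close>)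

lemma cyclic_wqt_has_strong_decomposable:
  assumes dg: "digraph V A" and W: "weakly_quasi_transitive V A" and "(u, u) \<in> A\<^sup>+"
  obtains S where "S \<subseteq> V" "2 \<le> card S" "strong_decomposable A S"
proof -
  have AV: "A \<subseteq> V \<times> V" and loopfree: "\<And>v. (v, v) \<notin> A"
    using dg unfolding digraph_def by auto
  obtain w where "(u, w) \<in> A" "(w, u) \<in> A\<^sup>*"
    using tranclD[OF assms(3)] by blast
  moreover from this have "w \<noteq> u"
    using loopfree by blast
  ultimately have "(w, u) \<in> A\<^sup>+" "(u, w) \<in> A"
    using rtranclD by metis+
  from cycle_imp_digon_or_triangle[OF dg W this] show thesis
  proof (elim disjE exE conjE)
    fix a b assume "(a, b) \<in> A" "(b, a) \<in> A"
    moreover from this have "a \<noteq> b"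
      using loopfree by blast
    ultimately show thesis
      using that[of "{a, b}"] strong_decomposable_digon[of a b A] AV by auto
  next
    fix a b c assume "(a, b) \<in> A" "(b, c) \<in> A" "(c, a) \<in> A"
    moreover from this have "a \<noteq> b"
      using loopfree by blast
    ultimately show thesis
      using that[of "{a, b, c}"] strong_decomposable_triangle[of a b A c]
        card_mono[of "{a, b, c}" "{a, b}"] AV by auto
  qed
qed

lemma acyclic_wqt_transitive_oriented:
  assumes dg: "digraph V A" and W: "weakly_quasi_transitive V A" and acyc: "\<And>u. (u, u) \<notin> A\<^sup>+"
  shows "transitive_oriented V A"
proof -
  have oriented: "oriented A"
    using acyc unfolding oriented_def by (meson r_into_trancl trancl_trans)
  have "(u, w) \<in> A" if uv: "(u, v) \<in> A" and vw: "(v, w) \<in> A" for u v w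
  proof -
    have "v \<in> V"
      using uv dg unfolding digraph_def by auto
    moreover have "(v, u) \<notin> A"
      using oriented uv unfolding oriented_def by blast
    ultimately have "adjacent A u w"
      using weakly_quasi_transitiveD[OF W, of v u w] uv vw unfolding arc_type_def adjacent_def
      by auto
    moreover have "(w, u) \<notin> A"
      using acyc uv vw by (meson r_into_trancl trancl_trans)
    ultimately show ?thesis
      unfolding adjacent_def by blast
  qed
  then show ?thesis
    using oriented unfolding transitive_oriented_def by blast
qed

lemma prime_wqt_classW:
  assumes dg: "digraph V A" and W: "weakly_quasi_transitive V A" and prime: "prime_digraph V A"
  shows "classW V A"
proof (cases "\<exists>u. (u, u) \<in> A\<^sup>+")
  case True
  then obtain S where "S \<subseteq> V" "2 \<le> card S" "strong_decomposable A S"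
    using cyclic_wqt_has_strong_decomposable[OF dg W] by blast
  then have "strong_decomposable A V"
    using prime_wqt_strong_decomposable[OF dg W prime] by blast
  then show ?thesis
    using prime_strong_decomposable_semicomplete_or_symmetric[OF dg W prime]
      classW.semicompl[OF dg] classW.symm[OF dg] by blast
next
  case False
  then show ?thesis
    using acyclic_wqt_transitive_oriented[OF dg W] classW.trans_or[OF dg] by blast
qed

lemma digraph_induced: "digraph V A \<Longrightarrow> U \<subseteq> V \<Longrightarrow> digraph U (A \<inter> U \<times> U)"
  unfolding digraph_def using finite_subset by blast

lemma wqt_induced:
  assumes "weakly_quasi_transitive V A" "U \<subseteq> V"
  shows "weakly_quasi_transitive U (A \<inter> U \<times> U)"
proof (rule weakly_quasi_transitiveI)
  fix v u w
  assume "v \<in> U" "adjacent (A \<inter> U \<times> U) v u" "adjacent (A \<inter> U \<times> U) v w"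
    "\<not> adjacent (A \<inter> U \<times> U) u w"
  then show "arc_type (A \<inter> U \<times> U) v u = arc_type (A \<inter> U \<times> U) v w"
    using weakly_quasi_transitiveD[OF assms(1), of v u w] assms(2)
    unfolding arc_type_def adjacent_def by auto
qed

lemma classW_singleton: "classW {v} {}"
  by (rule classW.trans_or) (auto simp: digraph_def transitive_oriented_def oriented_def)

lemma classW_module_quotient:
  assumes dg: "digraph V A" and mod: "module V A M" and m: "m \<in> M"
    and quotient: "classW (insert m (V - M)) (A \<inter> insert m (V - M) \<times> insert m (V - M))"
    and inner: "classW M (A \<inter> M \<times> M)"
  shows "classW V A"
proof -
  define VD where "VD = insert m (V - M)"
  define HV where "HV v = (if v = m then M else {v})" for v
  define HA where "HA v = (if v = m then A \<inter> M \<times> M else {})" for v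
  define owner where "owner x = (if x \<in> M then m else x)" for x
  have MV: "M \<subseteq> V"
    using mod unfolding module_def by blast
  have AV: "A \<subseteq> V \<times> V" and loopfree: "\<And>v. (v, v) \<notin> A"
    using dg unfolding digraph_def by auto
  interpret substitution VD "A \<inter> VD \<times> VD" HV HA
    by unfold_locales
      (use dg MV m in \<open>auto simp: VD_def HV_def HA_def digraph_def intro: finite_subset\<close>)
  have vertices: "subst_vertices VD HV = V"
    unfolding subst_vertices_def VD_def HV_def using MV m by auto
  have owner: "owner x \<in> VD" "x \<in> HV (owner x)" if "x \<in> V" for x
    using that m unfolding owner_def VD_def HV_def by auto
  have "(x, y) \<in> subst_arcs VD (A \<inter> VD \<times> VD) HV HA \<longleftrightarrow> (x, y) \<in> A"
    if "x \<in> V" "y \<in> V" for x y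
  proof -
    have "arc_type A y x = arc_type A y m" if "x \<in> M" "y \<notin> M" "y \<in> V" for x y
      using mod that m unfolding module_def by blast
    then have "(owner x, owner y) \<in> A \<longleftrightarrow> (x, y) \<in> A" if "owner x \<noteq> owner y"
      using that \<open>x \<in> V\<close> \<open>y \<in> V\<close> unfolding owner_def arc_type_def by (auto split: if_splits)
    moreover have "(x, y) \<in> HA (owner x) \<longleftrightarrow> (x, y) \<in> A" if "owner x = owner y"
      using that loopfree m unfolding owner_def HA_def by (auto split: if_splits)
    ultimately show ?thesis
      using subst_arcs_iff[OF owner(1)[OF \<open>x \<in> V\<close>] owner(1)[OF \<open>y \<in> V\<close>]
        owner(2)[OF \<open>x \<in> V\<close>] owner(2)[OF \<open>y \<in> V\<close>]] owner that VD_def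
      by (auto split: if_splits)
  qed
  then have arcs: "subst_arcs VD (A \<inter> VD \<times> VD) HV HA = A"
    using digraph_subst AV unfolding vertices digraph_def by auto
  have "classW (subst_vertices VD HV) (subst_arcs VD (A \<inter> VD \<times> VD) HV HA)"
  proof (rule classW.subst)
    show "classW VD (A \<inter> VD \<times> VD)"
      using quotient unfolding VD_def .
  qed (use inner classW_singleton m in \<open>auto simp: VD_def HV_def HA_def\<close>)
  then show ?thesis
    unfolding vertices arcs .
qed

lemma wqt_imp_classW:
  assumes "digraph V A" "weakly_quasi_transitive V A"
  shows "classW V A"
  using assms
proof (induction "card V" arbitrary: V A rule: less_induct)
  case less
  show ?case
  proof (cases "prime_digraph V A")
    case True
    then show ?thesis
      using prime_wqt_classW less.prems by blast
  next
    case False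
    then obtain M where M: "module V A M" "2 \<le> card M" "M \<noteq> V"
      unfolding prime_digraph_def by blast
    then obtain m where m: "m \<in> M"
      by fastforce
    let ?VD = "insert m (V - M)"
    have fin: "finite V" and MV: "M \<subseteq> V"
      using less.prems M(1) unfolding digraph_def module_def by auto
    have "card ?VD < card V"
      using card_Diff_subset[OF finite_subset[OF MV fin] MV] card_mono[OF fin MV] m fin M(2)
      by simp
    moreover have "card M < card V"
      using psubset_card_mono[OF fin] MV M(3) by blast
    moreover have "?VD \<subseteq> V"
      using MV m by blast
    ultimately show ?thesis
      using classW_module_quotient[OF less.prems(1) M(1) m] less.hyps MV
        digraph_induced[OF less.prems(1)] wqt_induced[OF less.prems(2)] by blast
  qed
qed

theorem theorem3p2:
  fixes V :: "'a set" and A :: "('a \<times> 'a) set"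
  shows "classW V A \<longleftrightarrow> digraph V A \<and> weakly_quasi_transitive V A"
  using classW_imp_digraph_wqt wqt_imp_classW by blast

end
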